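(* The size $z_{SSsr}$ of the self-referencing LZSS factorization satisfies (the alphabet being allowed to contain as many distinct characters as needed): substitutions: $\liminf_{n\to\infty}\mathsf{MS}_{\mathrm{sub}}(z_{SSsr},n)\ge 3$, $\mathsf{AS}_{\mathrm{sub}}(z_{SSsr},n)\ge 2z_{SSsr}-\Theta(\sqrt{z_{SSsr}})$ and $\mathsf{AS}_{\mathrm{sub}}(z_{SSsr},n)=\Omega(\sqrt n)$; insertions: $\liminf_{n\to\infty}\mathsf{MS}_{\mathrm{ins}}(z_{SSsr},n)\ge 2$, $\mathsf{AS}_{\mathrm{ins}}(z_{SSsr},n)\ge z_{SSsr}-\Theta(\sqrt{z_{SSsr}})$ and $\mathsf{AS}_{\mathrm{ins}}(z_{SSsr},n)=\Omega(\sqrt n)$; deletions: $\liminf_{n\to\infty}\mathsf{MS}_{\mathrm{del}}(z_{SSsr},n)\ge 3$, $\mathsf{AS}_{\mathrm{del}}(z_{SSsr},n)\ge 2z_{SSsr}-\Theta(\sqrt{z_{SSsr}})$ and $\mathsf{AS}_{\mathrm{del}}(z_{SSsr},n)=\Omega(\sqrt n)$.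
   Context: $\mathsf{ed}$ is the edit distance. $\mathsf{MS}_{\mathrm{sub}}(C,n)=\max_{T\in\Sigma^n}\{C(T')/C(T): T'\in\Sigma^n,\ \mathsf{ed}(T,T')=1\}$, with $\mathsf{MS}_{\mathrm{ins}},\mathsf{MS}_{\mathrm{del}}$ analogous for $T'$ of length $n+1$, resp. $n-1$, and $\mathsf{AS}_\ast$ analogous with $C(T')-C(T)$. Bounds in terms of $z_{SSsr}$ refer to $z_{SSsr}(T)$ of the original string and assert existence of strings $T$ (with $z_{SSsr}(T)$ arbitrarily large) and edited $T'$ achieving them. The self-referencing LZSS factorization of $T$ is $T=f_1\cdots f_z$ where each $f_i$ is either the first occurrence in $T$ of a character, or the longest prefix of $f_i\cdots f_z$ that occurs at least twice in $f_1\cdots f_i$ (occurrences may overlap); $z_{SSsr}(T)=z$. *)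

theory Defs
  imports Complex_Main "HOL-Library.Liminf_Limsup" "HOL-Library.Extended_Real" "HOL-Library.Landau_Symbols"
begin

fun ed :: "'a list \<Rightarrow> 'a list \<Rightarrow> nat" where
  "ed [] ys = length ys"
| "ed xs [] = length xs"
| "ed (x # xs) (y # ys) =
     min (min (ed xs (y # ys) + 1) (ed (x # xs) ys + 1))
         (ed xs ys + (if x = y then 0 else 1))"

text \<open>Length of the factor starting at position i (0-based): if T!i is the first occurrence
  of its character, the factor is that single character; otherwise it is the longest prefix of
  T[i..] that also occurs starting at some earlier position j < i (overlaps allowed).\<close>

definition lz_len :: "'a list \<Rightarrow> nat \<Rightarrow> nat" where
  "lz_len T i =
     (if T ! i \<notin> set (take i T) then 1
      else (GREATEST l. l \<le> length T - i \<and>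
                         (\<exists>j<i. take l (drop j T) = take l (drop i T))))"

lemma lz_len_pos:
  assumes "i < length T"
  shows "1 \<le> lz_len T i"
proof (cases "T ! i \<in> set (take i T)")
  case False
  then show ?thesis by (simp add: lz_len_def)
next
  case True
  then obtain j where j: "j < length (take i T)" "take i T ! j = T ! i"
    by (metis in_set_conv_nth)
  then have ji: "j < i" and eq: "T ! j = T ! i" by auto
  have P1: "1 \<le> length T - i \<and> (\<exists>j<i. take 1 (drop j T) = take 1 (drop i T))"
    using assms ji eq
    by (auto intro!: exI[of _ j] simp: take_Suc_conv_app_nth)
  have "1 \<le> (GREATEST l. l \<le> length T - i \<and>
                         (\<exists>j<i. take l (drop j T) = take l (drop i T)))"
    by (rule Greatest_le_nat[where b = "length T - i"]) (use P1 in auto)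
  then show ?thesis using True by (simp add: lz_len_def)
qed

function zfrom :: "'a list \<Rightarrow> nat \<Rightarrow> nat" where
  "zfrom T i = (if length T \<le> i then 0 else Suc (zfrom T (i + lz_len T i)))"
  by pat_completeness auto
termination
proof (relation "measure (\<lambda>(T, i). length T - i)")
  show "wf (measure (\<lambda>(T, i). length T - i))" by simp
next
  fix T :: "'a list" and i
  assume "\<not> length T \<le> i"
  then have "1 \<le> lz_len T i" using lz_len_pos[of i T] by linarith
  with \<open>\<not> length T \<le> i\<close> show "((T, i + lz_len T i), T, i) \<in> measure (\<lambda>(T, i). length T - i)"
    by simp
qed

definition z_SSsr :: "'a list \<Rightarrow> nat" where
  "z_SSsr T = zfrom T 0"

definition MS_sub :: "('a list \<Rightarrow> nat) \<Rightarrow> nat \<Rightarrow> real" where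
  "MS_sub C n = Sup {real (C T') / real (C T) | T T'.
      length T = n \<and> length T' = n \<and> ed T T' = 1}"

definition MS_ins :: "('a list \<Rightarrow> nat) \<Rightarrow> nat \<Rightarrow> real" where
  "MS_ins C n = Sup {real (C T') / real (C T) | T T'.
      length T = n \<and> length T' = n + 1 \<and> ed T T' = 1}"

definition MS_del :: "('a list \<Rightarrow> nat) \<Rightarrow> nat \<Rightarrow> real" where
  "MS_del C n = Sup {real (C T') / real (C T) | T T'.
      length T = n \<and> length T' + 1 = n \<and> ed T T' = 1}"

definition AS_sub :: "('a list \<Rightarrow> nat) \<Rightarrow> nat \<Rightarrow> real" where
  "AS_sub C n = Sup {real (C T') - real (C T) | T T'.
      length T = n \<and> length T' = n \<and> ed T T' = 1}"

definition AS_ins :: "('a list \<Rightarrow> nat) \<Rightarrow> nat \<Rightarrow> real" where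
  "AS_ins C n = Sup {real (C T') - real (C T) | T T'.
      length T = n \<and> length T' = n + 1 \<and> ed T T' = 1}"

definition AS_del :: "('a list \<Rightarrow> nat) \<Rightarrow> nat \<Rightarrow> real" where
  "AS_del C n = Sup {real (C T') - real (C T) | T T'.
      length T = n \<and> length T' + 1 = n \<and> ed T T' = 1}"

end

theory Submission
  imports Defs "HOL-Library.Sublist" "HOL-Library.Discrete_Functions"
begin

text \<open>
  Let \<open>T = 1\<^sup>N 0 2\<^sup>N B\<^sub>1 \<dots> B\<^sub>q 3\<^sup>r\<close> with blocks \<open>B\<^sub>i = 1\<^bsup>x i\<^esup> 0 2\<^sup>i\<close>, where \<open>x\<close> is strictly
  increasing, \<open>x 0 = 0\<close>, \<open>x q \<le> N\<close> and \<open>q \<le> N\<close>.  Every block copies a substring of the prefix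
  \<open>1\<^sup>N 0 2\<^sup>N\<close>, so the greedy factorization of \<open>T\<close> has at most \<open>q + 7\<close> phrases.  The edit acts on
  the single \<open>0\<close> of the prefix (substituting \<open>9\<close>, deleting it, or inserting \<open>9\<close> before it) and
  destroys these sources.  Phrases of the edited text are counted with novel windows: a substring
  without earlier occurrence contains the start of a phrase after its first position.  Each block
  of the edited text yields the novel windows \<open>1\<^bsup>x (i - 1) + 1\<^esup> 0\<close> and \<open>0 2\<^sup>i 1\<close>, and, when
  \<open>x i > 2 x (i - 1)\<close> and the prefix contains no \<open>0\<close>, also \<open>2 1\<^bsup>x i - x (i - 1)\<^esup>\<close> and
  \<open>0 2\<^sup>i\<close>.  With \<open>x i = 3\<^sup>i - 1\<close> and \<open>N = 3\<^sup>q\<close> this gives about \<open>3 q\<close> phrases after a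
  substitution or deletion; with \<open>x i = i\<close> and \<open>N = q\<close>, a text of length \<open>q\<^sup>2 + 4 q + 1\<close>, it gives
  about \<open>2 q\<close> phrases after each of the three edits.  The padding \<open>3\<^sup>r\<close> makes every length
  available.
\<close>

section \<open>Edit distance\<close>

lemma ed_same: "ed xs xs = 0"
  by (induction xs) auto

lemma ed_eq_0_iff: "ed xs ys = 0 \<longleftrightarrow> xs = ys"
proof
  show "ed xs ys = 0 \<Longrightarrow> xs = ys"
    by (induction xs ys rule: ed.induct) (auto split: if_splits)
qed (simp add: ed_same)

lemma ed_append_same_le: "ed (w @ xs) (w @ ys) \<le> ed xs ys"
proof (induction w)
  case (Cons a w)
  have "ed ((a # w) @ xs) ((a # w) @ ys) \<le> ed (w @ xs) (w @ ys)"
    by simp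
  with Cons show ?case
    by linarith
qed simp

lemma ed_eq_1I: "ed xs ys \<le> 1 \<Longrightarrow> xs \<noteq> ys \<Longrightarrow> ed xs ys = 1"
  using ed_eq_0_iff[of xs ys] by linarith

lemma ed_substitute:
  assumes "c \<noteq> d"
  shows "ed (A @ c # C) (A @ d # C) = 1"
proof (rule ed_eq_1I)
  have "ed (c # C) (d # C) \<le> ed C C + 1"
    unfolding ed.simps using assms by (simp del: ed.simps)
  then show "ed (A @ c # C) (A @ d # C) \<le> 1"
    using ed_append_same_le[of A "c # C" "d # C"] ed_same[of C] by linarith
qed (use assms in simp)

lemma ed_delete: "ed (A @ c # C) (A @ C) = 1"
proof (rule ed_eq_1I)
  have "ed (c # C) C \<le> ed C C + 1"
    by (cases C) simp_all
  then show "ed (A @ c # C) (A @ C) \<le> 1"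
    using ed_append_same_le[of A "c # C" C] ed_same[of C] by linarith
qed simp

lemma ed_insert: "ed (A @ C) (A @ d # C) = 1"
proof (rule ed_eq_1I)
  have "ed C (d # C) \<le> ed C C + 1"
    by (cases C) simp_all
  then show "ed (A @ C) (A @ d # C) \<le> 1"
    using ed_append_same_le[of A C "d # C"] ed_same[of C] by linarith
qed simp

section \<open>Lower and upper bounds on the number of phrases\<close>

lemma take_drop_shift:
  assumes "take l (drop j T) = take l (drop i T)" "d + e \<le> l"
  shows "take e (drop (j + d) T) = take e (drop (i + d) T)"
proof -
  have "take e (drop (j + d) T) = take e (drop d (take l (drop j T)))"
    using assms(2) by (simp add: drop_take take_take min_def add.commute)
  also have "\<dots> = take e (drop d (take l (drop i T)))"
    using assms(1) by simp
  also have "\<dots> = take e (drop (i + d) T)"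
    using assms(2) by (simp add: drop_take take_take min_def add.commute)
  finally show ?thesis .
qed

lemma lz_len_copy:
  assumes "T ! i \<in> set (take i T)"
  shows "\<exists>j<i. take (lz_len T i) (drop j T) = take (lz_len T i) (drop i T)"
proof -
  let ?P = "\<lambda>l. l \<le> length T - i \<and> (\<exists>j<i. take l (drop j T) = take l (drop i T))"
  have "?P 0"
    using assms by (auto simp: in_set_conv_nth)
  then have "?P (GREATEST l. ?P l)"
    by (rule GreatestI_nat[where b = "length T - i"]) simp
  then show ?thesis
    using assms by (simp add: lz_len_def)
qed

lemma lz_len_ge:
  assumes "1 \<le> e" "i + e \<le> length T" "j < i" "take e (drop j T) = take e (drop i T)"
  shows "e \<le> lz_len T i"
proof -
  have "take e (drop j T) ! 0 = take e (drop i T) ! 0"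
    using assms(4) by simp
  then have "T ! j = T ! i"
    using assms(1-3) by simp
  then have "take i T ! j = T ! i" and "j < length (take i T)"
    using assms(2,3) by simp_all
  then have seen: "T ! i \<in> set (take i T)"
    by (metis nth_mem)
  let ?P = "\<lambda>l. l \<le> length T - i \<and> (\<exists>j<i. take l (drop j T) = take l (drop i T))"
  have "e \<le> (GREATEST l. ?P l)"
    by (rule Greatest_le_nat[where b = "length T - i"]) (use assms in auto)
  then show ?thesis
    using seen by (simp add: lz_len_def)
qed

definition first_occ :: "'a list \<Rightarrow> nat \<Rightarrow> nat \<Rightarrow> bool" where
  "first_occ T a l \<longleftrightarrow> (\<forall>j<a. take l (drop j T) \<noteq> take l (drop a T))"

lemma first_occ_append: "first_occ T a l \<Longrightarrow> a + l \<le> length T \<Longrightarrow> first_occ (T @ R) a l"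
  unfolding first_occ_def by (auto simp: take_append)

lemma take_drop_append_left: "j + n \<le> length xs \<Longrightarrow> take n (drop j (xs @ ys)) = take n (drop j xs)"
  by (simp add: take_append)

lemma first_occ_if_not_sublist:
  assumes "\<not> sublist (w @ [c]) (A @ w)"
  shows "first_occ (A @ w @ c # R) (length A) (Suc (length w))"
  unfolding first_occ_def
proof (intro allI impI)
  fix j
  assume "j < length A"
  then have "take (Suc (length w)) (drop j ((A @ w) @ c # R)) = take (Suc (length w)) (drop j (A @ w))"
    by (intro take_drop_append_left) simp
  moreover have "sublist (take (Suc (length w)) (drop j (A @ w))) (A @ w)"
    by (meson sublist_drop sublist_take sublist_order.order_trans)
  ultimately show "take (Suc (length w)) (drop j (A @ w @ c # R))
      \<noteq> take (Suc (length w)) (drop (length A) (A @ w @ c # R))"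
    using assms by auto
qed

lemma not_first_occ_inside_phrase:
  assumes "i \<le> a" "a < b" "b < i + lz_len T i"
  shows "\<not> first_occ T a (Suc b - a)"
proof (cases "T ! i \<in> set (take i T)")
  case False
  then show ?thesis
    using assms by (simp add: lz_len_def)
next
  case True
  then obtain j where "j < i" and copy: "take (lz_len T i) (drop j T) = take (lz_len T i) (drop i T)"
    using lz_len_copy by blast
  have "take (Suc b - a) (drop (j + (a - i)) T) = take (Suc b - a) (drop (i + (a - i)) T)"
    by (rule take_drop_shift[OF copy]) (use assms in simp)
  moreover have "j + (a - i) < a"
    using \<open>j < i\<close> assms(1) by simp
  ultimately show ?thesis
    unfolding first_occ_def using assms(1) by auto
qed

text \<open>A window \<open>(a, b)\<close> stands for the substring \<open>T[a..b]\<close> (both ends included).\<close>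

definition novel_window :: "'a list \<Rightarrow> nat \<times> nat \<Rightarrow> bool" where
  "novel_window T w \<longleftrightarrow> fst w < snd w \<and> snd w < length T \<and> first_occ T (fst w) (Suc (snd w) - fst w)"

lemma novel_window_append: "novel_window T w \<Longrightarrow> novel_window (T @ R) w"
  unfolding novel_window_def using first_occ_append[of T "fst w" "Suc (snd w) - fst w" R] by auto

lemma novel_windowI:
  assumes "T = A @ w @ c # R" "w \<noteq> []" "\<not> sublist (w @ [c]) (A @ w)"
  shows "novel_window T (length A, length A + length w)"
  unfolding novel_window_def using assms first_occ_if_not_sublist[of w c A R] by auto

text \<open>Every novel window \<open>(a, b)\<close> contains the start of a phrase in \<open>(a, b]\<close>, and these intervals
  are disjoint for sorted windows; the first phrase comes on top.\<close>

lemma zfrom_gt_windows: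
  assumes "i < length T" "sorted_wrt (\<lambda>v w. snd v \<le> fst w) ws"
    "\<forall>w\<in>set ws. novel_window T w \<and> i \<le> fst w"
  shows "length ws < zfrom T i"
  using assms
proof (induction T i arbitrary: ws rule: zfrom.induct)
  case (1 T i)
  let ?k = "i + lz_len T i"
  have z: "zfrom T i = Suc (zfrom T ?k)"
    using "1.prems"(1) by simp
  show ?case
  proof (cases ws)
    case (Cons w rest)
    with "1.prems" have w: "novel_window T w" "i \<le> fst w"
      and rest: "sorted_wrt (\<lambda>v w. snd v \<le> fst w) rest" "\<forall>v\<in>set rest. novel_window T v \<and> snd w \<le> fst v"
      by auto
    have "?k \<le> snd w"
      using not_first_occ_inside_phrase[of i "fst w" "snd w" T] w unfolding novel_window_def by fastforce
    with w(1) rest have "length rest < zfrom T ?k"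
      by (intro "1.IH") (auto simp: novel_window_def)
    with z Cons show ?thesis
      by simp
  qed (use z in simp)
qed

lemma z_SSsr_gt_windows:
  assumes "T \<noteq> []" "sorted_wrt (\<lambda>v w. snd v \<le> fst w) ws" "\<forall>w\<in>set ws. novel_window T w"
  shows "length ws < z_SSsr T"
  unfolding z_SSsr_def using assms by (intro zfrom_gt_windows) auto

definition valid_phrase :: "'a list \<Rightarrow> nat \<Rightarrow> nat \<Rightarrow> bool" where
  "valid_phrase T i l \<longleftrightarrow> 1 \<le> l \<and> i + l \<le> length T \<and>
     (l = 1 \<or> (\<exists>j<i. take l (drop j T) = take l (drop i T)))"

fun is_parse :: "'a list \<Rightarrow> nat \<Rightarrow> nat list \<Rightarrow> nat \<Rightarrow> bool" where
  "is_parse T i [] e \<longleftrightarrow> i = e"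
| "is_parse T i (l # ls) e \<longleftrightarrow> valid_phrase T i l \<and> is_parse T (i + l) ls e"

lemma is_parse_append: "is_parse T i ls m \<Longrightarrow> is_parse T m ls' e \<Longrightarrow> is_parse T i (ls @ ls') e"
  by (induction ls arbitrary: i) auto

lemma is_parse_literals: "e \<le> length T \<Longrightarrow> n \<le> e \<Longrightarrow> is_parse T (e - n) (replicate n 1) e"
  by (induction n) (auto simp: valid_phrase_def Suc_diff_Suc)

lemma is_parse_run: "\<exists>ls. length ls \<le> 2 \<and> is_parse (X @ replicate m c @ Y) (length X) ls (length X + m)"
proof (cases m)
  case (Suc n)
  let ?T = "X @ replicate m c @ Y"
  have "drop (length X) ?T = replicate n c @ c # Y" "drop (Suc (length X)) ?T = replicate n c @ Y"
    using Suc by (simp_all add: replicate_app_Cons_same)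
  then have "take n (drop (Suc (length X)) ?T) = take n (drop (length X) ?T)"
    by simp
  then have "valid_phrase ?T (Suc (length X)) n" if "n \<noteq> 0"
    using Suc that by (auto simp: valid_phrase_def)
  moreover have "valid_phrase ?T (length X) 1"
    using Suc by (simp add: valid_phrase_def)
  ultimately have "is_parse ?T (length X) (if n = 0 then [1] else [1, n]) (length X + m)"
    using Suc by auto
  then show ?thesis
    by (intro exI[of _ "if n = 0 then [1] else [1, n]"]) simp
qed (auto intro: exI[of _ "[]"])

text \<open>The greedy factorization is a shortest parse: a greedy phrase reaches at least as far as any
  valid phrase covering its start.\<close>

lemma greedy_phrase_reaches_further:
  assumes "valid_phrase T i l" "i \<le> k" "k < i + l"
  shows "i + l \<le> k + lz_len T k"
proof (cases "l = 1")
  case True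
  then show ?thesis
    using assms lz_len_pos[of k T] by (simp add: valid_phrase_def)
next
  case False
  then obtain j where "j < i" and copy: "take l (drop j T) = take l (drop i T)"
    using assms(1) by (auto simp: valid_phrase_def)
  have "take (i + l - k) (drop (j + (k - i)) T) = take (i + l - k) (drop (i + (k - i)) T)"
    by (rule take_drop_shift[OF copy]) (use assms(2,3) in simp)
  then have "i + l - k \<le> lz_len T k"
    using assms \<open>j < i\<close> by (intro lz_len_ge[where j = "j + (k - i)"]) (auto simp: valid_phrase_def)
  then show ?thesis
    by simp
qed

lemma zfrom_le_parse: "is_parse T i ls (length T) \<Longrightarrow> i \<le> k \<Longrightarrow> zfrom T k \<le> length ls"
proof (induction ls arbitrary: i k)
  case (Cons l ls)
  then have phrase: "valid_phrase T i l" and rest: "is_parse T (i + l) ls (length T)"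
    by auto
  show ?case
  proof (cases "i + l \<le> k")
    case True
    with Cons.IH[OF rest] show ?thesis
      by simp
  next
    case False
    then have "k < length T"
      using phrase by (simp add: valid_phrase_def)
    moreover have "zfrom T (k + lz_len T k) \<le> length ls"
      using False Cons.prems(2) greedy_phrase_reaches_further[OF phrase] by (intro Cons.IH[OF rest]) simp_all
    ultimately show ?thesis
      by simp
  qed
qed simp

lemma z_SSsr_le_parse: "is_parse T 0 ls (length T) \<Longrightarrow> z_SSsr T \<le> length ls"
  unfolding z_SSsr_def by (rule zfrom_le_parse) simp_all

lemma z_SSsr_le_length: "z_SSsr T \<le> length T"
  using z_SSsr_le_parse is_parse_literals[of "length T" T "length T"] by fastforce

section \<open>Sublists around runs of a letter\<close>

lemma suffix_last: "suffix u S \<Longrightarrow> u \<noteq> [] \<Longrightarrow> S \<noteq> [] \<and> last S = last u"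
  by (auto simp: suffix_def)

lemma sublist_append_right_notin:
  assumes "sublist w (S @ B)" "w \<noteq> []" "last w \<notin> set B"
  shows "sublist w S"
  using assms(1) unfolding sublist_append
proof (elim disjE exE conjE)
  fix w1 w2
  assume w: "w = w1 @ w2" and "suffix w1 S" "prefix w2 B"
  have "w2 = []"
  proof (rule ccontr)
    assume "w2 \<noteq> []"
    then have "last w \<in> set w2"
      using w by simp
    with \<open>prefix w2 B\<close> assms(3) show False
      using set_mono_prefix by blast
  qed
  with w \<open>suffix w1 S\<close> show "sublist w S"
    by (simp add: suffix_imp_sublist)
next
  assume "sublist w B"
  then show "sublist w S"
    using assms(2,3) set_mono_sublist last_in_set by blast
qed

lemma sublist_append_left_notin:
  assumes "sublist w (B @ S)" "w \<noteq> []" "hd w \<notin> set B"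
  shows "sublist w S"
proof -
  have "sublist (rev w) (rev S @ rev B)"
    using assms(1) by (metis rev_append sublist_rev)
  then have "sublist (rev w) (rev S)"
    by (rule sublist_append_right_notin) (use assms(2,3) in \<open>simp_all add: last_rev\<close>)
  then show ?thesis
    by simp
qed

lemma sublist_append_replicate:
  assumes "sublist w (S @ replicate m c)"
  obtains "sublist w S" | u n where "w = u @ replicate n c" "suffix u S" "n \<le> m"
proof -
  have run: "v = replicate (length v) c \<and> length v \<le> m" if "sublist v (replicate m c)" for v
  proof -
    have "\<forall>y\<in>set v. y = c"
      using set_mono_sublist[OF that] by (auto split: if_splits simp: set_replicate_conv_if)
    then show ?thesis
      using sublist_length_le[OF that] by (simp add: replicate_length_same)
  qed
  from assms consider "sublist w S" | "sublist w (replicate m c)"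
    | w1 w2 where "w = w1 @ w2" "suffix w1 S" "prefix w2 (replicate m c)"
    unfolding sublist_append by blast
  then show thesis
  proof cases
    case 2
    with run[of w] show thesis
      by (intro that(2)[of "[]" "length w"]) auto
  next
    case 3
    with run[of w2] show thesis
      by (intro that(2)[of w1 "length w2"]) (auto simp: prefix_imp_sublist)
  qed (rule that(1))
qed

lemma cons_replicate_eq_append_replicate:
  assumes "a # replicate k c = u @ replicate n c" "a \<noteq> c"
  shows "n \<le> k \<and> u = a # replicate (k - n) c"
proof -
  have "u \<noteq> []"
    using assms by (metis append_Nil in_set_replicate list.set_intros(1))
  then have "n \<le> k"
    using arg_cong[OF assms(1), of length] by (cases u) auto
  moreover have "replicate k c = replicate (k - n) c @ replicate n c"
    using \<open>n \<le> k\<close> by (simp flip: replicate_add)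
  ultimately show ?thesis
    using assms(1) by simp
qed

lemma suffix_replicate_append_replicate:
  assumes "suffix (replicate k c) (S @ replicate m c)" "m < k"
  shows "S \<noteq> [] \<and> last S = c"
proof -
  have "\<not> suffix (replicate k c) (replicate m c)"
    using assms(2) suffix_length_le by fastforce
  then obtain u where "suffix u S" "replicate k c = u @ replicate m c"
    using assms(1) unfolding suffix_append by blast
  moreover from this have "u = replicate (k - m) c"
    using assms(2) by (metis append_same_eq replicate_add le_add_diff_inverse2 less_imp_le)
  ultimately show ?thesis
    using assms(2) suffix_last[of u S] by simp
qed

lemma suffix_cons_replicate_eq:
  assumes "suffix (a # replicate k c) (V @ replicate m c)" "a \<noteq> c" "V \<noteq> []" "last V \<noteq> c"
  shows "k = m"
proof -
  have "\<not> suffix (a # replicate k c) (replicate m c)"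
    using assms(2) set_mono_suffix by (metis in_set_replicate list.set_intros(1) subsetD)
  then obtain u where u: "suffix u V" "a # replicate k c = u @ replicate m c"
    using assms(1) unfolding suffix_append by blast
  from cons_replicate_eq_append_replicate[OF u(2) assms(2)]
  have "u = a # replicate (k - m) c" "m \<le> k"
    by auto
  moreover from this(1) have "last u \<noteq> c"
    using suffix_last[OF u(1)] assms(4) by simp
  ultimately show ?thesis
    by (cases "k - m") (auto split: if_splits)
qed

lemma sublist_cons_replicate_append_replicate:
  assumes "sublist (a # replicate k c) (S @ replicate m c)" "a \<noteq> c" "S \<noteq> []" "last S \<noteq> c"
  shows "sublist (a # replicate k c) S \<or> k \<le> m"
  using assms(1)
proof (cases rule: sublist_append_replicate)
  case (2 u n)
  from cons_replicate_eq_append_replicate[OF 2(1) assms(2)]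
  have "u = a # replicate (k - n) c" "n \<le> k"
    by auto
  moreover from this(1) have "last u \<noteq> c"
    using suffix_last[OF 2(2)] assms(4) by simp
  ultimately show ?thesis
    using 2(3) by (cases "k - n") (auto split: if_splits)
qed simp

lemma sublist_snoc_append_replicate:
  assumes "sublist (u @ [c]) (S @ replicate m c)" "c \<notin> set u"
  shows "sublist (u @ [c]) S \<or> suffix u S"
  using assms(1)
proof (cases rule: sublist_append_replicate)
  case (2 v n)
  show ?thesis
  proof (cases n)
    case 0
    with 2 show ?thesis
      by (simp add: suffix_imp_sublist)
  next
    case (Suc n')
    with 2 have "u = v @ replicate n' c"
      by (simp add: replicate_append_same[symmetric] del: replicate_append_same)
    with assms(2) have "u = v"
      by (cases n') auto
    with 2 show ?thesis
      by simp
  qed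
qed simp

section \<open>Blocks and their novel windows\<close>

fun blocks :: "(nat \<Rightarrow> nat) \<Rightarrow> nat \<Rightarrow> nat list" where
  "blocks x 0 = []"
| "blocks x (Suc i) = blocks x i @ replicate (x (Suc i)) 1 @ 0 # replicate (Suc i) 2"

lemma prefix_blocks: "i \<le> j \<Longrightarrow> prefix (blocks x i) (blocks x j)"
  by (induction j) (auto simp: le_Suc_eq intro: prefix_order.order_trans)

text \<open>The four kinds of novel windows met in block \<open>i + 1\<close>, which starts at position
  \<open>length (P @ blocks x i)\<close>: the last \<open>2\<close> of the preceding text followed by the first
  \<open>x (i + 1) - x i\<close> ones; the last \<open>x i + 1\<close> ones and the \<open>0\<close>; the \<open>0\<close> and the
  \<open>2\<close>-run; the \<open>0\<close>, the \<open>2\<close>-run and the first \<open>1\<close> of the next block.\<close>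

definition window_two_ones :: "nat list \<Rightarrow> (nat \<Rightarrow> nat) \<Rightarrow> nat \<Rightarrow> nat \<times> nat" where
  "window_two_ones P x i =
     (length (P @ blocks x i) - 1, length (P @ blocks x i) - 1 + (x (Suc i) - x i))"

definition window_ones_zero :: "nat list \<Rightarrow> (nat \<Rightarrow> nat) \<Rightarrow> nat \<Rightarrow> nat \<times> nat" where
  "window_ones_zero P x i =
     (length (P @ blocks x i) + (x (Suc i) - x i) - 1, length (P @ blocks x i) + x (Suc i))"

definition window_zero_twos :: "nat list \<Rightarrow> (nat \<Rightarrow> nat) \<Rightarrow> nat \<Rightarrow> nat \<times> nat" where
  "window_zero_twos P x i =
     (length (P @ blocks x i) + x (Suc i), length (P @ blocks x i) + x (Suc i) + Suc i)"

definition window_zero_twos_one :: "nat list \<Rightarrow> (nat \<Rightarrow> nat) \<Rightarrow> nat \<Rightarrow> nat \<times> nat" where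
  "window_zero_twos_one P x i = (length (P @ blocks x i) + x (Suc i), length (P @ blocks x (Suc i)))"

lemma novel_window_blocks_mono:
  assumes "novel_window (P @ blocks x i) w" "i \<le> j"
  shows "novel_window (P @ blocks x j @ R) w"
proof -
  obtain D where "blocks x j = blocks x i @ D"
    using prefix_blocks[OF assms(2)] by (auto simp: prefix_def)
  then show ?thesis
    using novel_window_append[OF assms(1), of "D @ R"] by simp
qed

lemma sorted_wrt_concat_windows:
  fixes b :: "nat \<Rightarrow> nat"
  assumes "mono b" "\<And>i. i < q \<Longrightarrow> sorted_wrt (\<lambda>v w. snd v \<le> fst w) (f i)"
    "\<And>i w. i < q \<Longrightarrow> w \<in> set (f i) \<Longrightarrow> b i \<le> fst w \<and> snd w \<le> b (Suc i)"
  shows "sorted_wrt (\<lambda>v w. snd v \<le> fst w) (concat (map f [0..<q]))"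
  using assms(2,3)
proof (induction q)
  case (Suc q)
  have "snd v \<le> fst w" if "v \<in> set (f i)" "i < q" "w \<in> set (f q)" for v w i
  proof -
    have "snd v \<le> b (Suc i)"
      using Suc.prems(2)[of i v] that by simp
    also have "\<dots> \<le> b q"
      using monoD[OF assms(1)] that(2) by simp
    also have "\<dots> \<le> fst w"
      using Suc.prems(2)[of q w] that(3) by simp
    finally show ?thesis .
  qed
  with Suc show ?case
    by (auto simp: sorted_wrt_append)
qed simp

text \<open>The window \<open>0 2\<^sup>i 1\<close> of a block ends in the following block, hence the extra block below.\<close>

lemma z_SSsr_gt_block_windows:
  fixes f :: "nat \<Rightarrow> (nat \<times> nat) list" and b :: "nat \<Rightarrow> nat"
  assumes "mono b" "\<And>i. length (f i) = c"
    "\<And>i. i < q \<Longrightarrow> sorted_wrt (\<lambda>v w. snd v \<le> fst w) (f i)"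
    "\<And>i w. i < q \<Longrightarrow> w \<in> set (f i) \<Longrightarrow>
       novel_window (P @ blocks x (Suc (Suc i))) w \<and> b i \<le> fst w \<and> snd w \<le> b (Suc i)"
  shows "c * q < z_SSsr (P @ blocks x (Suc q) @ R)"
proof -
  let ?ws = "concat (map f [0..<q])"
  have "length ?ws = c * q"
    by (simp add: length_concat assms(2) comp_def map_replicate_const sum_list_replicate)
  moreover have "sorted_wrt (\<lambda>v w. snd v \<le> fst w) ?ws"
    using assms by (intro sorted_wrt_concat_windows) blast+
  moreover have "novel_window (P @ blocks x (Suc q) @ R) w" if "w \<in> set ?ws" for w
  proof -
    from that obtain i where "i < q" "w \<in> set (f i)"
      by auto
    with assms(4) have "novel_window (P @ blocks x (Suc (Suc i))) w"
      by blast
    then show ?thesis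
      by (rule novel_window_blocks_mono) (use \<open>i < q\<close> in simp)
  qed
  ultimately show ?thesis
    using z_SSsr_gt_windows[of "P @ blocks x (Suc q) @ R" ?ws] by simp
qed

lemma zero_twos_not_sublist_append_block:
  assumes "\<not> sublist (0 # replicate k 2) S" "m < k"
  shows "\<not> sublist (0 # replicate k (2::nat)) (S @ replicate a 1 @ 0 # replicate m 2)"
proof
  assume "sublist (0 # replicate k 2) (S @ replicate a 1 @ 0 # replicate m 2)"
  then have "sublist (0 # replicate k 2) ((S @ replicate a 1 @ [0]) @ replicate m 2)"
    by simp
  then show False
  proof (cases rule: sublist_append_replicate)
    case 1
    then have "sublist (0 # replicate k 2) S"
      by (rule sublist_append_right_notin) (use assms(2) in auto)
    with assms(1) show False ..
  next
    case (2 u n)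
    from cons_replicate_eq_append_replicate[OF 2(1)]
    have u: "u = 0 # replicate (k - n) 2"
      by simp
    then have "last u = 2"
      using 2(3) assms(2) by simp
    with suffix_last[OF 2(2)] u show False
      by simp
  qed
qed

context
  fixes P :: "nat list" and x :: "nat \<Rightarrow> nat"
  assumes x_strict: "strict_mono x" and x_0: "x 0 = 0" and P_ne: "P \<noteq> []" and last_P: "last P = 2"
begin

lemma x_less_Suc: "x i < x (Suc i)"
  using x_strict by (simp add: strict_mono_Suc_iff)

lemma last_text: "last (P @ blocks x i) = 2"
  by (cases i) (simp_all add: last_P)

lemma ones_zero_not_sublist:
  assumes "\<forall>k\<ge>1. \<not> sublist (replicate k 1 @ [0]) P"
  shows "x i < k \<Longrightarrow> \<not> sublist (replicate k 1 @ [0]) (P @ blocks x i)"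
proof (induction i arbitrary: k)
  case 0
  then have "1 \<le> k"
    using x_0 by simp
  with assms show ?case
    by simp
next
  case (Suc i)
  let ?T = "P @ blocks x i" and ?w = "replicate k 1 @ [0]"
  show ?case
  proof
    assume "sublist ?w (P @ blocks x (Suc i))"
    then have "sublist ?w ((?T @ replicate (x (Suc i)) 1 @ [0]) @ replicate (Suc i) 2)"
      by simp
    then have "sublist ?w (?T @ replicate (x (Suc i)) 1 @ [0])"
      by (rule sublist_append_right_notin) simp_all
    then have "sublist ?w ((?T @ replicate (x (Suc i)) 1) @ [0])"
      by simp
    then consider "sublist ?w (?T @ replicate (x (Suc i)) 1)"
      | "suffix (replicate k 1) (?T @ replicate (x (Suc i)) 1)"
      using sublist_snoc[of ?w "?T @ replicate (x (Suc i)) 1" 0]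
        snoc_suffix_snoc[of "replicate k 1" 0 "?T @ replicate (x (Suc i)) 1" 0] by blast
    then show False
    proof cases
      case 1
      then have "sublist ?w ?T"
        by (rule sublist_append_right_notin) simp_all
      moreover have "x i < k"
        using Suc.prems x_less_Suc[of i] by linarith
      ultimately show False
        using Suc.IH by blast
    next
      case 2
      have "last ?T = 1"
        using suffix_replicate_append_replicate[OF 2 Suc.prems] by (rule conjunct2)
      with last_text show False
        by simp
    qed
  qed
qed

lemma zero_twos_not_sublist:
  assumes "0 \<notin> set P"
  shows "i < k \<Longrightarrow> \<not> sublist (0 # replicate k 2) (P @ blocks x i)"
proof (induction i arbitrary: k)
  case 0
  with assms show ?case
    using set_mono_sublist by fastforce
next
  case (Suc i)
  then show ?case
    using zero_twos_not_sublist_append_block[of k "P @ blocks x i" "Suc i"] by simp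
qed

lemma zero_twos_one_sublist:
  assumes "\<forall>k. \<not> sublist (0 # replicate k 2 @ [1]) P"
  shows "sublist (0 # replicate k 2 @ [1]) (P @ blocks x i) \<Longrightarrow> k < i \<or> suffix (0 # replicate k 2) P"
proof (induction i)
  case 0
  with assms show ?case
    by simp
next
  case (Suc i)
  let ?T = "P @ blocks x i"
  have "sublist ((0 # replicate k 2) @ [1]) ((?T @ replicate (x (Suc i)) 1) @ 0 # replicate (Suc i) 2)"
    using Suc.prems by simp
  then have "sublist ((0 # replicate k 2) @ [1]) (?T @ replicate (x (Suc i)) 1)"
    by (rule sublist_append_right_notin) auto
  then have "sublist ((0 # replicate k 2) @ [1]) ?T \<or> suffix (0 # replicate k 2) ?T"
    by (rule sublist_snoc_append_replicate) simp
  then show ?case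
  proof
    assume "suffix (0 # replicate k 2) ?T"
    show ?case
    proof (cases i)
      case (Suc j)
      have "suffix (0 # replicate k 2) ((P @ blocks x j @ replicate (x i) 1 @ [0]) @ replicate i 2)"
        using \<open>suffix (0 # replicate k 2) ?T\<close> Suc by simp
      then have "k = i"
        by (rule suffix_cons_replicate_eq) simp_all
      then show ?thesis
        by simp
    qed (use \<open>suffix (0 # replicate k 2) ?T\<close> in simp)
  qed (use Suc.IH in auto)
qed

lemma two_ones_sublist_le:
  assumes "\<forall>k\<ge>1. \<not> sublist (2 # replicate k 1) P"
  shows "sublist (2 # replicate k 1) (P @ blocks x i) \<Longrightarrow> k \<le> x i"
proof (induction i)
  case 0
  with assms show ?case
    by (cases k) auto
next
  case (Suc i)
  let ?T = "P @ blocks x i"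
  show ?case
  proof (cases k)
    case (Suc k')
    have "sublist (2 # replicate k 1) ((?T @ replicate (x (Suc i)) 1) @ 0 # replicate (Suc i) 2)"
      using Suc.prems by simp
    then have "sublist (2 # replicate k 1) (?T @ replicate (x (Suc i)) 1)"
      by (rule sublist_append_right_notin) (use Suc in auto)
    then have "sublist (2 # replicate k 1) ?T \<or> k \<le> x (Suc i)"
      by (rule sublist_cons_replicate_append_replicate) (simp_all add: last_text P_ne)
    then show ?thesis
      using Suc.IH x_less_Suc[of i] by auto
  qed simp
qed

lemma novel_window_two_ones:
  assumes "\<forall>k\<ge>1. \<not> sublist (2 # replicate k 1) P" "2 * x i < x (Suc i)"
  shows "novel_window (P @ blocks x (Suc i)) (window_two_ones P x i)"
proof -
  let ?T = "P @ blocks x i" and ?b = "x (Suc i) - x i"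
  obtain A where A: "?T = A @ [2]"
    using last_text[of i] P_ne by (metis append_butlast_last_id append_is_Nil_conv)
  have b: "x i < ?b"
    using assms(2) by simp
  then have run: "replicate ?b (1::nat) = replicate (?b - 1) 1 @ [1]"
    by (simp add: replicate_append_same Suc_diff_1 flip: replicate_Suc)
  have split: "P @ blocks x (Suc i) =
      A @ (2 # replicate (?b - 1) 1) @ 1 # replicate (x i) 1 @ 0 # replicate (Suc i) 2"
  proof -
    have "replicate (x (Suc i)) (1::nat) = replicate ?b 1 @ replicate (x i) 1"
      using x_less_Suc[of i] by (simp flip: replicate_add)
    with A run show ?thesis
      by simp
  qed
  have notsub: "\<not> sublist ((2 # replicate (?b - 1) 1) @ [1]) (A @ 2 # replicate (?b - 1) 1)"
  proof
    assume "sublist ((2 # replicate (?b - 1) 1) @ [1]) (A @ 2 # replicate (?b - 1) 1)"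
    then have "sublist (2 # replicate ?b 1) (?T @ replicate (?b - 1) 1)"
      using A run by simp
    then have "sublist (2 # replicate ?b 1) ?T \<or> ?b \<le> ?b - 1"
      by (rule sublist_cons_replicate_append_replicate) (simp_all add: last_text P_ne)
    then show False
      using two_ones_sublist_le[OF assms(1), of ?b i] b by auto
  qed
  have "novel_window (P @ blocks x (Suc i)) (length A, length A + length (2 # replicate (?b - 1) (1::nat)))"
    by (rule novel_windowI[OF split _ notsub]) simp
  moreover have "window_two_ones P x i = (length A, length A + length (2 # replicate (?b - 1) (1::nat)))"
    unfolding window_two_ones_def using A b by simp
  ultimately show ?thesis
    by simp
qed

lemma novel_window_ones_zero:
  assumes "\<forall>k\<ge>1. \<not> sublist (replicate k 1 @ [0]) P"
  shows "novel_window (P @ blocks x (Suc i)) (window_ones_zero P x i)"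
proof -
  let ?T = "P @ blocks x i" and ?b = "x (Suc i) - x i"
  let ?A = "?T @ replicate (?b - 1) 1" and ?w = "replicate (Suc (x i)) (1::nat)"
  have "x (Suc i) = (?b - 1) + Suc (x i)"
    using x_less_Suc[of i] by simp
  then have "replicate (x (Suc i)) (1::nat) = replicate (?b - 1) 1 @ ?w"
    by (metis replicate_add)
  then have split: "P @ blocks x (Suc i) = ?A @ ?w @ 0 # replicate (Suc i) 2"
    by simp
  have notsub: "\<not> sublist (?w @ [0]) (?A @ ?w)"
  proof
    assume "sublist (?w @ [0]) (?A @ ?w)"
    then have "sublist (?w @ [0]) (?T @ replicate (?b - 1) 1 @ ?w)"
      by simp
    then have "sublist (?w @ [0]) ?T"
      by (rule sublist_append_right_notin) simp_all
    with ones_zero_not_sublist[OF assms, of i "Suc (x i)"] show False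
      by simp
  qed
  have "novel_window (P @ blocks x (Suc i)) (length ?A, length ?A + length ?w)"
    by (rule novel_windowI[OF split _ notsub]) simp
  then show ?thesis
    unfolding window_ones_zero_def using x_less_Suc[of i] by (simp add: ac_simps)
qed

lemma novel_window_zero_twos:
  assumes "0 \<notin> set P"
  shows "novel_window (P @ blocks x (Suc i)) (window_zero_twos P x i)"
proof -
  let ?A = "P @ blocks x i @ replicate (x (Suc i)) 1" and ?w = "0 # replicate i (2::nat)"
  have split: "P @ blocks x (Suc i) = ?A @ ?w @ [2]"
    by (simp add: replicate_append_same)
  have notsub: "\<not> sublist (?w @ [2]) (?A @ ?w)"
    using zero_twos_not_sublist_append_block[OF zero_twos_not_sublist[OF assms], of i "Suc i" i]
    by (simp add: replicate_append_same)
  have "novel_window (P @ blocks x (Suc i)) (length ?A, length ?A + length ?w)"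
    by (rule novel_windowI[OF split _ notsub]) simp
  then show ?thesis
    unfolding window_zero_twos_def by (simp add: ac_simps)
qed

lemma novel_window_zero_twos_one:
  assumes "\<forall>k. \<not> sublist (0 # replicate k 2 @ [1]) P" "\<not> suffix (0 # replicate (Suc i) 2) P"
  shows "novel_window (P @ blocks x (Suc (Suc i))) (window_zero_twos_one P x i)"
proof -
  let ?A = "P @ blocks x i @ replicate (x (Suc i)) 1" and ?w = "0 # replicate (Suc i) (2::nat)"
  have "x (Suc (Suc i)) = Suc (x (Suc (Suc i)) - 1)"
    using x_less_Suc[of "Suc i"] by simp
  then have split: "P @ blocks x (Suc (Suc i)) =
      ?A @ ?w @ 1 # replicate (x (Suc (Suc i)) - 1) 1 @ 0 # replicate (Suc (Suc i)) 2"
    by (metis append.assoc append_Cons blocks.simps(2) replicate_Suc)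
  have notsub: "\<not> sublist (?w @ [1]) (?A @ ?w)"
  proof
    assume "sublist (?w @ [1]) (?A @ ?w)"
    then have "sublist (0 # replicate (Suc i) 2 @ [1]) (P @ blocks x (Suc i))"
      by simp
    from zero_twos_one_sublist[OF assms(1) this] assms(2) show False
      by simp
  qed
  have "novel_window (P @ blocks x (Suc (Suc i))) (length ?A, length ?A + length ?w)"
    by (rule novel_windowI[OF split _ notsub]) simp
  then show ?thesis
    unfolding window_zero_twos_one_def by (simp add: ac_simps)
qed

lemma z_SSsr_gt_three_per_block:
  assumes "0 \<notin> set P" "\<forall>k\<ge>1. \<not> sublist (2 # replicate k 1) P" "\<forall>i. 2 * x i < x (Suc i)"
  shows "3 * q < z_SSsr (P @ blocks x (Suc q) @ R)"
proof (rule z_SSsr_gt_block_windows)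
  let ?b = "\<lambda>i. length (P @ blocks x i) - 1"
  show "mono ?b"
    by (auto simp: mono_iff_le_Suc)
  fix i
  let ?f = "[window_two_ones P x i, window_ones_zero P x i, window_zero_twos P x i]"
  show "length ?f = 3"
    by simp
  have "1 \<le> length P" "x i < x (Suc i)"
    using P_ne x_less_Suc[of i] by (simp_all add: Suc_le_eq)
  then show "sorted_wrt (\<lambda>v w. snd v \<le> fst w) ?f"
    by (simp add: window_two_ones_def window_ones_zero_def window_zero_twos_def)
  have "\<forall>k\<ge>1. \<not> sublist (replicate k 1 @ [0]) P"
    using assms(1) set_mono_sublist by fastforce
  then have novel: "novel_window (P @ blocks x (Suc i)) w" if "w \<in> set ?f" for w
    using that novel_window_two_ones novel_window_ones_zero novel_window_zero_twos assms by auto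
  have "novel_window (P @ blocks x (Suc (Suc i)) @ []) w" if "w \<in> set ?f" for w
    by (rule novel_window_blocks_mono[OF novel[OF that]]) simp
  moreover have "?b i \<le> fst w \<and> snd w \<le> ?b (Suc i)" if "w \<in> set ?f" for w
    using that \<open>1 \<le> length P\<close> \<open>x i < x (Suc i)\<close>
    by (auto simp: window_two_ones_def window_ones_zero_def window_zero_twos_def)
  ultimately show "w \<in> set ?f \<Longrightarrow>
      novel_window (P @ blocks x (Suc (Suc i))) w \<and> ?b i \<le> fst w \<and> snd w \<le> ?b (Suc i)" for w
    by simp
qed

lemma z_SSsr_gt_two_per_block:
  assumes "\<forall>k\<ge>1. \<not> sublist (replicate k 1 @ [0]) P" "\<forall>k. \<not> sublist (0 # replicate k 2 @ [1]) P"
    "\<forall>k\<in>{1..q}. \<not> suffix (0 # replicate k 2) P"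
  shows "2 * q < z_SSsr (P @ blocks x (Suc q) @ R)"
proof (rule z_SSsr_gt_block_windows)
  let ?b = "\<lambda>i. length (P @ blocks x i)"
  show "mono ?b"
    by (auto simp: mono_iff_le_Suc)
  fix i
  let ?f = "[window_ones_zero P x i, window_zero_twos_one P x i]"
  show "length ?f = 2"
    by simp
  have "x i < x (Suc i)"
    using x_less_Suc[of i] .
  then show "sorted_wrt (\<lambda>v w. snd v \<le> fst w) ?f"
    by (simp add: window_ones_zero_def window_zero_twos_one_def)
  assume "i < q"
  then have "Suc i \<in> {1..q}"
    by simp
  with assms(3) have "\<not> suffix (0 # replicate (Suc i) 2) P"
    by blast
  then have "novel_window (P @ blocks x (Suc (Suc i))) (window_zero_twos_one P x i)"
    by (rule novel_window_zero_twos_one[OF assms(2)])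
  moreover have "novel_window (P @ blocks x (Suc (Suc i)) @ []) (window_ones_zero P x i)"
    by (rule novel_window_blocks_mono[OF novel_window_ones_zero[OF assms(1)]]) simp
  ultimately have "novel_window (P @ blocks x (Suc (Suc i))) w" if "w \<in> set ?f" for w
    using that by auto
  then show "w \<in> set ?f \<Longrightarrow>
      novel_window (P @ blocks x (Suc (Suc i))) w \<and> ?b i \<le> fst w \<and> snd w \<le> ?b (Suc i)" for w
    using \<open>x i < x (Suc i)\<close> by (auto simp: window_ones_zero_def window_zero_twos_one_def)
qed

lemma z_SSsr_gt_one_per_block:
  assumes "\<forall>k. \<not> sublist (0 # replicate k 2 @ [1]) P" "\<forall>k\<in>{1..q}. \<not> suffix (0 # replicate k 2) P"
  shows "q < z_SSsr (P @ blocks x (Suc q) @ R)"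
proof -
  let ?b = "\<lambda>i. length (P @ blocks x i)"
  have "1 * q < z_SSsr (P @ blocks x (Suc q) @ R)"
  proof (rule z_SSsr_gt_block_windows)
    show "mono ?b"
      by (auto simp: mono_iff_le_Suc)
    fix i
    let ?f = "[window_zero_twos_one P x i]"
    show "length ?f = 1" "sorted_wrt (\<lambda>v w. snd v \<le> fst w) ?f"
      by simp_all
    assume "i < q"
    then have "Suc i \<in> {1..q}"
      by simp
    with assms(2) have "\<not> suffix (0 # replicate (Suc i) 2) P"
      by blast
    then have "novel_window (P @ blocks x (Suc (Suc i))) (window_zero_twos_one P x i)"
      by (rule novel_window_zero_twos_one[OF assms(1)])
    then show "w \<in> set ?f \<Longrightarrow>
      novel_window (P @ blocks x (Suc (Suc i))) w \<and> ?b i \<le> fst w \<and> snd w \<le> ?b (Suc i)" for w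
      by (auto simp: window_zero_twos_one_def)
  qed
  then show ?thesis
    by simp
qed

end

section \<open>The frame\<close>

text \<open>The original texts start with \<open>frame N [0]\<close>; the edited ones with \<open>frame N [9]\<close>,
  \<open>frame N []\<close> or \<open>frame N [9, 0]\<close>.\<close>

definition frame :: "nat \<Rightarrow> nat list \<Rightarrow> nat list" where
  "frame N mid = replicate N 1 @ mid @ replicate N 2"

lemma frame_ne: "1 \<le> N \<Longrightarrow> frame N mid \<noteq> []"
  by (simp add: frame_def)

lemma last_frame: "1 \<le> N \<Longrightarrow> last (frame N mid) = 2"
  by (simp add: frame_def)

lemma two_ones_not_sublist_frame:
  assumes "2 \<notin> set mid" "1 \<le> k"
  shows "\<not> sublist (2 # replicate k 1) (frame N mid)"
proof
  assume "sublist (2 # replicate k 1) (frame N mid)"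
  then have "sublist (2 # replicate k 1) ((replicate N 1 @ mid) @ replicate N 2)"
    by (simp add: frame_def)
  then have "sublist (2 # replicate k 1) (replicate N 1 @ mid)"
    by (rule sublist_append_right_notin) (use assms(2) in simp_all)
  then show False
    using assms(1) set_mono_sublist by fastforce
qed

lemma zero_twos_one_not_sublist_frame:
  assumes "1 \<notin> set mid"
  shows "\<not> sublist (0 # replicate k 2 @ [1]) (frame N mid)"
proof
  assume "sublist (0 # replicate k 2 @ [1]) (frame N mid)"
  then have "sublist (0 # replicate k 2 @ [1]) (mid @ replicate N 2)"
    unfolding frame_def by (rule sublist_append_left_notin) simp_all
  then have "sublist (0 # replicate k 2 @ [1]) mid"
    by (rule sublist_append_right_notin) simp_all
  then show False
    using assms set_mono_sublist by fastforce
qed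

lemma suffix_zero_twos_frame:
  assumes "suffix (0 # replicate k 2) (frame N mid)" "2 \<notin> set mid" "1 \<le> N"
  shows "k = N"
proof (rule suffix_cons_replicate_eq)
  show "suffix (0 # replicate k 2) ((replicate N 1 @ mid) @ replicate N 2)"
    using assms(1) by (simp add: frame_def)
  show "replicate N 1 @ mid \<noteq> []"
    using assms(3) by simp
  then have "last (replicate N 1 @ mid) \<in> set (replicate N 1 @ mid)"
    by (rule last_in_set)
  with assms(2) show "last (replicate N 1 @ mid) \<noteq> 2"
    by auto
qed simp

lemma ones_zero_not_sublist_frame_insertion:
  assumes "1 \<le> k"
  shows "\<not> sublist (replicate k 1 @ [0]) (frame N [9, 0])"
proof
  let ?U = "replicate N 1 @ [9::nat]"
  assume "sublist (replicate k 1 @ [0]) (frame N [9, 0])"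
  then have "sublist (replicate k 1 @ [0]) ((?U @ [0]) @ replicate N 2)"
    by (simp add: frame_def)
  then have "sublist (replicate k 1 @ [0]) (?U @ [0])"
    by (rule sublist_append_right_notin) simp_all
  then have "sublist (replicate k 1 @ [0]) ?U \<or> suffix (replicate k 1) ?U"
    using sublist_snoc[of "replicate k 1 @ [0]" ?U 0] snoc_suffix_snoc[of "replicate k 1" 0 ?U 0] by blast
  then show False
  proof
    assume "suffix (replicate k 1) ?U"
    with suffix_last[of "replicate k 1" ?U] assms show False
      by simp
  qed (use set_mono_sublist in fastforce)
qed

lemma ed_frame_substitution: "ed (frame N [0] @ S) (frame N [9] @ S) = 1"
  unfolding frame_def using ed_substitute[of 0 9 "replicate N 1" "replicate N 2 @ S"] by simp

lemma ed_frame_deletion: "ed (frame N [0] @ S) (frame N [] @ S) = 1"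
  unfolding frame_def using ed_delete[of "replicate N 1" 0 "replicate N 2 @ S"] by simp

lemma ed_frame_insertion: "ed (frame N [0] @ S) (frame N [9, 0] @ S) = 1"
  unfolding frame_def using ed_insert[of "replicate N 1" "0 # replicate N 2 @ S" 9] by simp

lemma length_frame: "length (frame N mid) = 2 * N + length mid"
  by (simp add: frame_def)

text \<open>Each block \<open>1\<^sup>a 0 2\<^sup>b\<close> with \<open>a, b \<le> N\<close> is a copy from \<open>frame N [0]\<close>, hence one phrase.\<close>

lemma is_parse_blocks:
  assumes "\<And>i. i < q \<Longrightarrow> x (Suc i) \<le> N" "q \<le> N"
  shows "\<exists>ls. length ls = q \<and>
    is_parse (frame N [0] @ blocks x q @ R) (length (frame N [0])) ls (length (frame N [0] @ blocks x q))"
  using assms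
proof (induction q arbitrary: R)
  case (Suc q)
  let ?a = "x (Suc q)" and ?i = "length (frame N [0] @ blocks x q)"
  let ?B = "replicate ?a (1::nat) @ 0 # replicate (Suc q) 2"
  let ?T = "frame N [0] @ blocks x (Suc q) @ R"
  have "\<exists>ls. length ls = q \<and> is_parse (frame N [0] @ blocks x q @ ?B @ R) (length (frame N [0])) ls ?i"
    by (rule Suc.IH) (use Suc.prems in auto)
  then obtain ls where "length ls = q"
    and ls: "is_parse (frame N [0] @ blocks x q @ ?B @ R) (length (frame N [0])) ls ?i"
    by blast
  have "?a \<le> N"
    using Suc.prems(1) by simp
  then have "replicate N (1::nat) = replicate (N - ?a) 1 @ replicate ?a 1"
    by (metis replicate_add le_add_diff_inverse2)
  moreover have "replicate N (2::nat) = replicate (Suc q) 2 @ replicate (N - Suc q) 2"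
    using Suc.prems(2) by (metis replicate_add le_add_diff_inverse)
  ultimately have "frame N [0] = replicate (N - ?a) 1 @ ?B @ replicate (N - Suc q) 2"
    unfolding frame_def by simp
  then have "take (length ?B) (drop (N - ?a) ?T) = ?B"
    by simp
  moreover have "take (length ?B) (drop ?i ?T) = ?B"
    by simp
  moreover have "N - ?a < ?i"
    by (simp add: length_frame)
  ultimately have "valid_phrase ?T ?i (length ?B)"
    unfolding valid_phrase_def by auto
  then have "is_parse ?T (length (frame N [0])) (ls @ [length ?B]) (length (frame N [0] @ blocks x (Suc q)))"
    using ls by (intro is_parse_append) simp_all
  with \<open>length ls = q\<close> show ?case
    by (intro exI[of _ "ls @ [length ?B]"]) simp
qed simp

lemma z_SSsr_original_le:
  assumes "strict_mono x" "x q \<le> N" "q \<le> N"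
  shows "z_SSsr (frame N [0] @ blocks x q @ replicate r 3) \<le> q + 7"
proof -
  let ?B = "blocks x q @ replicate r 3"
  let ?T = "frame N [0] @ ?B"
  have T: "?T = [] @ replicate N 1 @ (0 # replicate N 2 @ ?B)"
    "?T = (replicate N 1 @ [0]) @ replicate N 2 @ ?B"
    by (simp_all add: frame_def)
  obtain ls1 where ls1: "length ls1 \<le> 2" "is_parse ?T 0 ls1 N"
    using is_parse_run[of "[]" N 1 "0 # replicate N 2 @ ?B"] T(1) by auto
  have zero: "is_parse ?T N [1] (Suc N)"
    by (simp add: valid_phrase_def frame_def)
  obtain ls2 where ls2: "length ls2 \<le> 2" "is_parse ?T (Suc N) ls2 (length (frame N [0]))"
    using is_parse_run[of "replicate N 1 @ [0]" N 2 ?B] T(2) by (auto simp: length_frame mult_2)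
  have "x (Suc i) \<le> N" if "i < q" for i
    using strict_mono_less_eq[OF assms(1)] that assms(2) by (meson Suc_leI le_trans)
  then obtain ls3 where ls3: "length ls3 = q"
    "is_parse ?T (length (frame N [0])) ls3 (length (frame N [0] @ blocks x q))"
    using is_parse_blocks[of q x N "replicate r 3"] assms(3) by blast
  obtain ls4 where ls4: "length ls4 \<le> 2" "is_parse ?T (length (frame N [0] @ blocks x q)) ls4 (length ?T)"
    using is_parse_run[of "frame N [0] @ blocks x q" r 3 "[]"] by (auto simp: add.assoc)
  have "is_parse ?T 0 (ls1 @ [1] @ ls2 @ ls3 @ ls4) (length ?T)"
    by (rule is_parse_append[OF ls1(2) is_parse_append[OF zero is_parse_append[OF ls2(2)
          is_parse_append[OF ls3(2) ls4(2)]]]])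
  then have "z_SSsr ?T \<le> length (ls1 @ [1] @ ls2 @ ls3 @ ls4)"
    by (rule z_SSsr_le_parse)
  with ls1(1) ls2(1) ls3(1) ls4(1) show ?thesis
    by simp
qed

lemma z_SSsr_original_gt:
  assumes "strict_mono x" "x 0 = 0" "q < N"
  shows "q < z_SSsr (frame N [0] @ blocks x (Suc q) @ R)"
proof (rule z_SSsr_gt_one_per_block)
  show "frame N [0] \<noteq> []" "last (frame N [0]) = 2"
    using assms(3) frame_ne last_frame by simp_all
  show "\<forall>k. \<not> sublist (0 # replicate k 2 @ [1]) (frame N [0])"
    using zero_twos_one_not_sublist_frame[of "[0]"] by simp
  show "\<forall>k\<in>{1..q}. \<not> suffix (0 # replicate k 2) (frame N [0])"
    using suffix_zero_twos_frame[of _ N "[0]"] assms(3) by fastforce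
qed (use assms in simp_all)

lemma z_SSsr_edited_gt_three:
  assumes "strict_mono x" "x 0 = 0" "\<forall>i. 2 * x i < x (Suc i)" "1 \<le> N" "0 \<notin> set mid" "2 \<notin> set mid"
  shows "3 * q < z_SSsr (frame N mid @ blocks x (Suc q) @ R)"
proof (rule z_SSsr_gt_three_per_block)
  show "frame N mid \<noteq> []" "last (frame N mid) = 2"
    using assms(4) frame_ne last_frame by simp_all
  show "0 \<notin> set (frame N mid)"
    using assms(5) by (simp add: frame_def)
  show "\<forall>k\<ge>1. \<not> sublist (2 # replicate k 1) (frame N mid)"
    using assms(6) two_ones_not_sublist_frame by blast
qed (use assms in simp_all)

lemma z_SSsr_edited_gt_two:
  assumes "strict_mono x" "x 0 = 0" "q < N" "1 \<notin> set mid" "2 \<notin> set mid"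
    "\<forall>k\<ge>1. \<not> sublist (replicate k 1 @ [0]) (frame N mid)"
  shows "2 * q < z_SSsr (frame N mid @ blocks x (Suc q) @ R)"
proof (rule z_SSsr_gt_two_per_block)
  show "frame N mid \<noteq> []" "last (frame N mid) = 2"
    using assms(3) frame_ne last_frame by simp_all
  show "\<forall>k. \<not> sublist (0 # replicate k 2 @ [1]) (frame N mid)"
    using assms(4) zero_twos_one_not_sublist_frame by blast
  show "\<forall>k\<in>{1..q}. \<not> suffix (0 # replicate k 2) (frame N mid)"
    using suffix_zero_twos_frame[of _ N mid] assms(3,5) by fastforce
qed (use assms in simp_all)

section \<open>The two families of texts\<close>

text \<open>In \<open>exp_text\<close> the block exponents \<open>3\<^sup>i - 1\<close> more than double from block to block, which
  gives three novel windows per block; \<open>quad_text\<close> has length \<open>Q\<^sup>2 + 4 Q + 1\<close> before padding,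
  which gives the \<open>\<Omega>(\<surd>n)\<close> bounds.\<close>

definition exp_text :: "nat list \<Rightarrow> nat \<Rightarrow> nat \<Rightarrow> nat list" where
  "exp_text mid Q r = frame (3 ^ Q) mid @ blocks (\<lambda>i. 3 ^ i - 1) Q @ replicate r 3"

definition quad_text :: "nat list \<Rightarrow> nat \<Rightarrow> nat \<Rightarrow> nat list" where
  "quad_text mid Q r = frame Q mid @ blocks id Q @ replicate r 3"

lemma pow3_pred_superincreasing: "2 * (3 ^ i - 1) < 3 ^ Suc i - (1::nat)"
proof -
  have "1 \<le> (3::nat) ^ i" "(3::nat) ^ Suc i = 3 * 3 ^ i"
    by simp_all
  then show ?thesis
    by arith
qed

lemma strict_mono_pow3_pred: "strict_mono (\<lambda>i::nat. 3 ^ i - 1 :: nat)"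
  unfolding strict_mono_Suc_iff using pow3_pred_superincreasing by (metis le_add2 le_less_trans mult_2)

lemma length_blocks_id: "length (blocks id q) = q * q + 2 * q"
  by (induction q) simp_all

lemma length_exp_text:
  "length (exp_text mid Q r) = 2 * 3 ^ Q + length mid + length (blocks (\<lambda>i. 3 ^ i - 1) Q) + r"
  by (simp add: exp_text_def length_frame)

lemma length_quad_text: "length (quad_text mid Q r) = Q * Q + 4 * Q + length mid + r"
  by (simp add: quad_text_def length_frame length_blocks_id)

lemma z_SSsr_original_bounds:
  assumes "strict_mono x" "x 0 = 0" "x Q \<le> N" "Q \<le> N" "1 \<le> Q"
  shows "Q \<le> z_SSsr (frame N [0] @ blocks x Q @ replicate r 3)"
    and "z_SSsr (frame N [0] @ blocks x Q @ replicate r 3) \<le> Q + 7"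
proof -
  obtain q where "Q = Suc q"
    using assms(5) by (cases Q) auto
  with assms show "Q \<le> z_SSsr (frame N [0] @ blocks x Q @ replicate r 3)"
    using z_SSsr_original_gt[of x q N "replicate r 3"] by simp
  show "z_SSsr (frame N [0] @ blocks x Q @ replicate r 3) \<le> Q + 7"
    using assms by (intro z_SSsr_original_le)
qed

lemma z_SSsr_exp_text_original:
  assumes "1 \<le> Q"
  shows "Q \<le> z_SSsr (exp_text [0] Q r)" and "z_SSsr (exp_text [0] Q r) \<le> Q + 7"
proof -
  have "Q < 2 ^ Q"
    by (rule less_exp)
  also have "(2::nat) ^ Q \<le> 3 ^ Q"
    by (simp add: power_mono)
  finally have "Q \<le> 3 ^ Q"
    by simp
  then show "Q \<le> z_SSsr (exp_text [0] Q r)" and "z_SSsr (exp_text [0] Q r) \<le> Q + 7"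
    unfolding exp_text_def using z_SSsr_original_bounds[OF strict_mono_pow3_pred _ _ _ assms] by simp_all
qed

lemma z_SSsr_exp_text_edited:
  assumes "1 \<le> Q" "mid = [9] \<or> mid = []"
  shows "3 * Q \<le> z_SSsr (exp_text mid Q r) + 2"
proof -
  obtain q where "Q = Suc q"
    using assms(1) by (cases Q) auto
  moreover have "3 * q < z_SSsr (frame (3 ^ Q) mid @ blocks (\<lambda>i. 3 ^ i - 1) (Suc q) @ replicate r 3)"
    using assms(2) pow3_pred_superincreasing by (intro z_SSsr_edited_gt_three strict_mono_pow3_pred) auto
  ultimately show ?thesis
    by (simp add: exp_text_def)
qed

lemma z_SSsr_quad_text_original:
  assumes "1 \<le> Q"
  shows "Q \<le> z_SSsr (quad_text [0] Q r)" and "z_SSsr (quad_text [0] Q r) \<le> Q + 7"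
  unfolding quad_text_def using z_SSsr_original_bounds[of id Q Q, OF _ _ _ _ assms]
  by (simp_all add: strict_mono_def)

lemma z_SSsr_quad_text_edited:
  assumes "1 \<le> Q" "mid \<in> {[9], [], [9, 0]}"
  shows "2 * Q \<le> z_SSsr (quad_text mid Q r) + 1"
proof -
  obtain q where "Q = Suc q"
    using assms(1) by (cases Q) auto
  moreover have "\<forall>k\<ge>1. \<not> sublist (replicate k 1 @ [0]) (frame Q mid)"
    using assms(2) ones_zero_not_sublist_frame_insertion set_mono_sublist
    by (fastforce simp: frame_def)
  ultimately have "2 * q < z_SSsr (frame Q mid @ blocks id (Suc q) @ replicate r 3)"
    using assms(2) by (intro z_SSsr_edited_gt_two) (auto simp: strict_mono_def)
  with \<open>Q = Suc q\<close> show ?thesis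
    by (simp add: quad_text_def)
qed

lemma ed_exp_text:
  "ed (exp_text [0] Q r) (exp_text [9] Q r) = 1" "ed (exp_text [0] Q r) (exp_text [] Q r) = 1"
  unfolding exp_text_def by (rule ed_frame_substitution ed_frame_deletion)+

lemma ed_quad_text:
  "ed (quad_text [0] Q r) (quad_text [9] Q r) = 1" "ed (quad_text [0] Q r) (quad_text [] Q r) = 1"
  "ed (quad_text [0] Q r) (quad_text [9, 0] Q r) = 1"
  unfolding quad_text_def by (rule ed_frame_substitution ed_frame_deletion ed_frame_insertion)+

section \<open>Sensitivity bounds\<close>

lemma of_nat_divide_le: "real k / real l \<le> real k"
proof (cases "l = 0")
  case False
  then have "1 \<le> real l"
    by simp
  then show ?thesis
    using divide_left_mono[of 1 "real l" "real k"] by simp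
qed simp

lemma le_Sup_ratio:
  fixes C :: "'a \<Rightarrow> nat"
  assumes "P a b" "\<And>A B. P A B \<Longrightarrow> C B \<le> m"
  shows "real (C b) / real (C a) \<le> Sup {real (C B) / real (C A) | A B. P A B}"
proof (rule cSup_upper)
  have "real (C B) / real (C A) \<le> real m" if "P A B" for A B
    using of_nat_divide_le[of "C B" "C A"] assms(2)[OF that] by linarith
  then show "bdd_above {real (C B) / real (C A) | A B. P A B}"
    by (intro bdd_aboveI[where M = "real m"]) blast
qed (use assms(1) in blast)

lemma le_Sup_diff:
  fixes C :: "'a \<Rightarrow> nat"
  assumes "P a b" "\<And>A B. P A B \<Longrightarrow> C B \<le> m"
  shows "real (C b) - real (C a) \<le> Sup {real (C B) - real (C A) | A B. P A B}"
proof (rule cSup_upper)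
  have "real (C B) - real (C A) \<le> real m" if "P A B" for A B
    using assms(2)[OF that] by linarith
  then show "bdd_above {real (C B) - real (C A) | A B. P A B}"
    by (intro bdd_aboveI[where M = "real m"]) blast
qed (use assms(1) in blast)

lemma ratio_le_MS_sub:
  fixes T T' :: "'a list"
  assumes "length T' = length T" "ed T T' = 1"
  shows "real (z_SSsr T') / real (z_SSsr T) \<le> MS_sub (z_SSsr :: 'a list \<Rightarrow> nat) (length T)"
  unfolding MS_sub_def
  by (rule le_Sup_ratio[where m = "length T"])
    (use assms in \<open>auto intro: z_SSsr_le_length[THEN order_trans]\<close>)

lemma ratio_le_MS_ins:
  fixes T T' :: "'a list"
  assumes "length T' = length T + 1" "ed T T' = 1"
  shows "real (z_SSsr T') / real (z_SSsr T) \<le> MS_ins (z_SSsr :: 'a list \<Rightarrow> nat) (length T)"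
  unfolding MS_ins_def
  by (rule le_Sup_ratio[where m = "length T + 1"])
    (use assms in \<open>auto intro: z_SSsr_le_length[THEN order_trans]\<close>)

lemma ratio_le_MS_del:
  fixes T T' :: "'a list"
  assumes "length T' + 1 = length T" "ed T T' = 1"
  shows "real (z_SSsr T') / real (z_SSsr T) \<le> MS_del (z_SSsr :: 'a list \<Rightarrow> nat) (length T)"
  unfolding MS_del_def
  by (rule le_Sup_ratio[where m = "length T"])
    (use assms in \<open>auto intro: z_SSsr_le_length[THEN order_trans]\<close>)

lemma diff_le_AS_sub:
  fixes T T' :: "'a list"
  assumes "length T' = length T" "ed T T' = 1"
  shows "real (z_SSsr T') - real (z_SSsr T) \<le> AS_sub (z_SSsr :: 'a list \<Rightarrow> nat) (length T)"
  unfolding AS_sub_def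
  by (rule le_Sup_diff[where m = "length T"])
    (use assms in \<open>auto intro: z_SSsr_le_length[THEN order_trans]\<close>)

lemma diff_le_AS_ins:
  fixes T T' :: "'a list"
  assumes "length T' = length T + 1" "ed T T' = 1"
  shows "real (z_SSsr T') - real (z_SSsr T) \<le> AS_ins (z_SSsr :: 'a list \<Rightarrow> nat) (length T)"
  unfolding AS_ins_def
  by (rule le_Sup_diff[where m = "length T + 1"])
    (use assms in \<open>auto intro: z_SSsr_le_length[THEN order_trans]\<close>)

lemma diff_le_AS_del:
  fixes T T' :: "'a list"
  assumes "length T' + 1 = length T" "ed T T' = 1"
  shows "real (z_SSsr T') - real (z_SSsr T) \<le> AS_del (z_SSsr :: 'a list \<Rightarrow> nat) (length T)"
  unfolding AS_del_def
  by (rule le_Sup_diff[where m = "length T"])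
    (use assms in \<open>auto intro: z_SSsr_le_length[THEN order_trans]\<close>)

lemma ratio_ge_of_bounds:
  fixes c d q z z' :: nat
  assumes "c * q \<le> z' + d" "z \<le> q + 7" "1 \<le> z" "1 \<le> q"
  shows "real c - real (7 * c + d) / real q \<le> real z' / real z"
proof (cases "d \<le> c * q")
  case True
  have "real c - real (7 * c + d) / real q \<le> (real c * real q - real d) / (real q + 7)"
    using assms(4) by (simp add: field_simps)
  also have "\<dots> \<le> (real c * real q - real d) / real z"
    using True assms(2,3) by (intro divide_left_mono) (simp_all flip: of_nat_mult)
  also have "\<dots> \<le> real z' / real z"
    using assms(1,3) by (intro divide_right_mono) (simp_all flip: of_nat_mult)
  finally show ?thesis .
next
  case False
  then have "real c * real q - real (7 * c + d) \<le> 0"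
    by (simp flip: of_nat_mult)
  then have "real c - real (7 * c + d) / real q \<le> 0"
    using assms(4) by (simp add: field_simps)
  moreover have "0 \<le> real z' / real z"
    by simp
  ultimately show ?thesis
    by linarith
qed

lemma eventually_ratio_ge:
  fixes T T' :: "nat \<Rightarrow> 'a list" and M :: "nat \<Rightarrow> real"
  assumes "\<And>r. length (T r) = l + r"
    "\<And>r. real (z_SSsr (T' r)) / real (z_SSsr (T r)) \<le> M (length (T r))"
    "\<And>r. c * Q \<le> z_SSsr (T' r) + d" "\<And>r. Q \<le> z_SSsr (T r)" "\<And>r. z_SSsr (T r) \<le> Q + 7" "1 \<le> Q"
  shows "\<forall>\<^sub>F n in sequentially. real c - real (7 * c + d) / real Q \<le> M n"
proof (rule eventually_sequentiallyI[of l])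
  fix n
  assume "l \<le> n"
  then obtain r where "n = l + r"
    using le_Suc_ex by blast
  have "real c - real (7 * c + d) / real Q \<le> real (z_SSsr (T' r)) / real (z_SSsr (T r))"
    by (rule ratio_ge_of_bounds) (use assms(3-6) in \<open>auto intro: order_trans\<close>)
  also have "\<dots> \<le> M n"
    using assms(1,2) \<open>n = l + r\<close> by metis
  finally show "real c - real (7 * c + d) / real Q \<le> M n" .
qed

lemma ereal_le_liminf_if_approx:
  fixes f :: "nat \<Rightarrow> real" and c K :: real
  assumes "\<And>q. 1 \<le> q \<Longrightarrow> \<forall>\<^sub>F n in sequentially. c - K / real q \<le> f n"
  shows "ereal c \<le> liminf (\<lambda>n. ereal (f n))"
  unfolding le_Liminf_iff
proof (intro allI impI)
  fix y
  assume "y < ereal c"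
  have "(\<lambda>q. c - K / real q) \<longlonglongrightarrow> c"
    using tendsto_diff[OF tendsto_const lim_const_over_n, of c K] by simp
  then have "((\<lambda>q. ereal (c - K / real q)) \<longlongrightarrow> ereal c) sequentially"
    by (rule tendsto_ereal)
  from order_tendstoD(1)[OF this \<open>y < ereal c\<close>]
  have "\<forall>\<^sub>F q in sequentially. y < ereal (c - K / real q)" .
  then have "\<forall>\<^sub>F q in sequentially. y < ereal (c - K / real q) \<and> 1 \<le> q"
    using eventually_ge_at_top[of 1] by (rule eventually_conj)
  then obtain N where N: "\<forall>n\<ge>N. y < ereal (c - K / real n) \<and> 1 \<le> n"
    unfolding eventually_sequentially by blast
  then have "y < ereal (c - K / real N)"
    by simp
  moreover have "\<forall>\<^sub>F n in sequentially. c - K / real N \<le> f n"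
    using N by (intro assms) simp
  ultimately show "\<forall>\<^sub>F n in sequentially. y < ereal (f n)"
    by (auto elim!: eventually_mono intro: less_le_trans)
qed

lemma bigomega_sqrt_if_ge:
  fixes f :: "nat \<Rightarrow> real" and c :: real
  assumes "\<And>q n. 1 \<le> q \<Longrightarrow> (q + 2)\<^sup>2 \<le> n \<Longrightarrow> real q - c \<le> f n"
  shows "f \<in> \<Omega>(\<lambda>n. sqrt (real n))"
proof (rule landau_omega.bigI[where c = "1 / 2"])
  define n0 where "n0 = nat \<lceil>(2 * \<bar>c\<bar> + 6)\<^sup>2\<rceil> + 9"
  show "\<forall>\<^sub>F n in sequentially. 1 / 2 * norm (sqrt (real n)) \<le> norm (f n)"
  proof (rule eventually_sequentiallyI[of n0])
    fix n
    assume "n0 \<le> n"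
    define s where "s = floor_sqrt n"
    have "(2 * \<bar>c\<bar> + 6)\<^sup>2 \<le> real n"
      using \<open>n0 \<le> n\<close> unfolding n0_def by linarith
    then have large: "2 * \<bar>c\<bar> + 6 \<le> sqrt (real n)"
      by (rule real_le_rsqrt)
    have "n < (Suc s)\<^sup>2"
      unfolding s_def by (rule Suc_floor_sqrt_power2_gt)
    then have "real n < real ((Suc s)\<^sup>2)"
      by (simp only: of_nat_less_iff)
    then have "real n < (real s + 1)\<^sup>2"
      by (simp add: add.commute)
    then have "sqrt (real n) < real s + 1"
      using real_sqrt_less_mono by fastforce
    have "3 \<le> s"
      unfolding s_def using \<open>n0 \<le> n\<close> by (intro le_floor_sqrtI) (simp add: n0_def)
    define q where "q = s - 2"
    have s: "s = q + 2" "1 \<le> q"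
      using \<open>3 \<le> s\<close> by (simp_all add: q_def)
    have "(q + 2)\<^sup>2 \<le> n"
      using floor_sqrt_power2_le[of n] by (simp add: s_def[symmetric] s(1))
    then have "real q - c \<le> f n"
      using s(2) by (intro assms)
    with \<open>sqrt (real n) < real s + 1\<close> large s(1) show "1 / 2 * norm (sqrt (real n)) \<le> norm (f n)"
      by simp
  qed
qed simp

lemma additive_witness:
  fixes T T' :: "nat \<Rightarrow> 'a list"
  assumes "\<And>Q. 1 \<le> Q \<Longrightarrow> P (T Q) (T' Q)" "\<And>Q. 1 \<le> Q \<Longrightarrow> Q \<le> z_SSsr (T Q)"
    "\<And>Q. 1 \<le> Q \<Longrightarrow> z_SSsr (T Q) \<le> Q + 7" "\<And>Q. 1 \<le> Q \<Longrightarrow> c * Q \<le> z_SSsr (T' Q) + d"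
    "7 * c + d \<le> 23"
  shows "\<exists>A B. m \<le> z_SSsr A \<and> P A B \<and>
    real c * real (z_SSsr A) - 23 * sqrt (real (z_SSsr A)) \<le> real (z_SSsr B)"
proof (intro exI conjI)
  let ?Q = "Suc m"
  show "m \<le> z_SSsr (T ?Q)" "P (T ?Q) (T' ?Q)"
    using assms(1,2)[of ?Q] by simp_all
  have "1 \<le> sqrt (real (z_SSsr (T ?Q)))"
    using assms(2)[of ?Q] by simp
  moreover have "c * z_SSsr (T ?Q) \<le> c * (?Q + 7)"
    using assms(3)[of ?Q] by simp
  then have "c * z_SSsr (T ?Q) \<le> z_SSsr (T' ?Q) + 23"
    using assms(4)[of ?Q] assms(5) by (simp add: algebra_simps)
  then have "real c * real (z_SSsr (T ?Q)) \<le> real (z_SSsr (T' ?Q)) + 23"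
    by (metis of_nat_add of_nat_le_iff of_nat_mult of_nat_numeral)
  ultimately show
    "real c * real (z_SSsr (T ?Q)) - 23 * sqrt (real (z_SSsr (T ?Q))) \<le> real (z_SSsr (T' ?Q))"
    by linarith
qed

lemma MS_sub_approx:
  assumes "1 \<le> Q"
  shows "\<forall>\<^sub>F n in sequentially. 3 - 23 / real Q \<le> MS_sub (z_SSsr :: nat list \<Rightarrow> nat) n"
proof -
  have "\<forall>\<^sub>F n in sequentially. real 3 - real (7 * 3 + 2) / real Q \<le> MS_sub (z_SSsr :: nat list \<Rightarrow> nat) n"
  proof (rule eventually_ratio_ge[where T = "exp_text [0] Q" and T' = "exp_text [9] Q"])
    fix r
    show "length (exp_text [0] Q r) = length (exp_text [0] Q 0) + r"
      by (simp add: length_exp_text)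
    show "real (z_SSsr (exp_text [9] Q r)) / real (z_SSsr (exp_text [0] Q r))
        \<le> MS_sub (z_SSsr :: nat list \<Rightarrow> nat) (length (exp_text [0] Q r))"
      by (rule ratio_le_MS_sub) (simp_all add: length_exp_text ed_exp_text)
    show "3 * Q \<le> z_SSsr (exp_text [9] Q r) + 2"
      using z_SSsr_exp_text_edited[OF assms] by simp
    show "Q \<le> z_SSsr (exp_text [0] Q r)" "z_SSsr (exp_text [0] Q r) \<le> Q + 7"
      using z_SSsr_exp_text_original[OF assms] by simp_all
  qed (rule assms)
  then show ?thesis
    by simp
qed

lemma MS_del_approx:
  assumes "1 \<le> Q"
  shows "\<forall>\<^sub>F n in sequentially. 3 - 23 / real Q \<le> MS_del (z_SSsr :: nat list \<Rightarrow> nat) n"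
proof -
  have "\<forall>\<^sub>F n in sequentially. real 3 - real (7 * 3 + 2) / real Q \<le> MS_del (z_SSsr :: nat list \<Rightarrow> nat) n"
  proof (rule eventually_ratio_ge[where T = "exp_text [0] Q" and T' = "exp_text [] Q"])
    fix r
    show "length (exp_text [0] Q r) = length (exp_text [0] Q 0) + r"
      by (simp add: length_exp_text)
    show "real (z_SSsr (exp_text [] Q r)) / real (z_SSsr (exp_text [0] Q r))
        \<le> MS_del (z_SSsr :: nat list \<Rightarrow> nat) (length (exp_text [0] Q r))"
      by (rule ratio_le_MS_del) (simp_all add: length_exp_text ed_exp_text)
    show "3 * Q \<le> z_SSsr (exp_text [] Q r) + 2"
      using z_SSsr_exp_text_edited[OF assms] by simp
    show "Q \<le> z_SSsr (exp_text [0] Q r)" "z_SSsr (exp_text [0] Q r) \<le> Q + 7"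
      using z_SSsr_exp_text_original[OF assms] by simp_all
  qed (rule assms)
  then show ?thesis
    by simp
qed

lemma MS_ins_approx:
  assumes "1 \<le> Q"
  shows "\<forall>\<^sub>F n in sequentially. 2 - 15 / real Q \<le> MS_ins (z_SSsr :: nat list \<Rightarrow> nat) n"
proof -
  have "\<forall>\<^sub>F n in sequentially. real 2 - real (7 * 2 + 1) / real Q \<le> MS_ins (z_SSsr :: nat list \<Rightarrow> nat) n"
  proof (rule eventually_ratio_ge[where T = "quad_text [0] Q" and T' = "quad_text [9, 0] Q"])
    fix r
    show "length (quad_text [0] Q r) = length (quad_text [0] Q 0) + r"
      by (simp add: length_quad_text)
    show "real (z_SSsr (quad_text [9, 0] Q r)) / real (z_SSsr (quad_text [0] Q r))
        \<le> MS_ins (z_SSsr :: nat list \<Rightarrow> nat) (length (quad_text [0] Q r))"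
      by (rule ratio_le_MS_ins) (simp_all add: length_quad_text ed_quad_text)
    show "2 * Q \<le> z_SSsr (quad_text [9, 0] Q r) + 1"
      using z_SSsr_quad_text_edited[OF assms] by simp
    show "Q \<le> z_SSsr (quad_text [0] Q r)" "z_SSsr (quad_text [0] Q r) \<le> Q + 7"
      using z_SSsr_quad_text_original[OF assms] by simp_all
  qed (rule assms)
  then show ?thesis
    by simp
qed

lemma AS_ge_of_quad_text:
  fixes AS :: "nat \<Rightarrow> real"
  assumes "1 \<le> q" "(q + 2)\<^sup>2 \<le> n" "mid \<in> {[9], [], [9, 0]}"
    "\<And>r. real (z_SSsr (quad_text mid q r)) - real (z_SSsr (quad_text [0] q r))
      \<le> AS (length (quad_text [0] q r))"
  shows "real q - 8 \<le> AS n"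
proof -
  define r where "r = n - (q * q + 4 * q + 1)"
  have "length (quad_text [0] q r) = n"
    using assms(2) by (simp add: r_def length_quad_text power2_eq_square algebra_simps)
  moreover have "real q - 8 \<le> real (z_SSsr (quad_text mid q r)) - real (z_SSsr (quad_text [0] q r))"
    using z_SSsr_quad_text_edited[OF assms(1,3), of r] z_SSsr_quad_text_original(2)[OF assms(1), of r]
    by linarith
  ultimately show ?thesis
    using assms(4)[of r] by simp
qed

lemma AS_sub_ge: "1 \<le> q \<Longrightarrow> (q + 2)\<^sup>2 \<le> n \<Longrightarrow> real q - 8 \<le> AS_sub (z_SSsr :: nat list \<Rightarrow> nat) n"
  by (rule AS_ge_of_quad_text[where mid = "[9]"]; (rule diff_le_AS_sub)?)
    (simp_all add: length_quad_text ed_quad_text)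

lemma AS_del_ge: "1 \<le> q \<Longrightarrow> (q + 2)\<^sup>2 \<le> n \<Longrightarrow> real q - 8 \<le> AS_del (z_SSsr :: nat list \<Rightarrow> nat) n"
  by (rule AS_ge_of_quad_text[where mid = "[]"]; (rule diff_le_AS_del)?)
    (simp_all add: length_quad_text ed_quad_text)

lemma AS_ins_ge: "1 \<le> q \<Longrightarrow> (q + 2)\<^sup>2 \<le> n \<Longrightarrow> real q - 8 \<le> AS_ins (z_SSsr :: nat list \<Rightarrow> nat) n"
  by (rule AS_ge_of_quad_text[where mid = "[9, 0]"]; (rule diff_le_AS_ins)?)
    (simp_all add: length_quad_text ed_quad_text)

lemma substitution_witness:
  "\<exists>T T' :: nat list. m \<le> z_SSsr T \<and> length T' = length T \<and> ed T T' = 1 \<and>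
     2 * real (z_SSsr T) - 23 * sqrt (real (z_SSsr T)) \<le> real (z_SSsr T') - real (z_SSsr T)"
proof -
  have "\<exists>A B :: nat list. m \<le> z_SSsr A \<and> (length B = length A \<and> ed A B = 1) \<and>
      real 3 * real (z_SSsr A) - 23 * sqrt (real (z_SSsr A)) \<le> real (z_SSsr B)"
    by (rule additive_witness[where T = "\<lambda>Q. exp_text [0] Q 0" and T' = "\<lambda>Q. exp_text [9] Q 0" and d = 2];
        (rule z_SSsr_exp_text_edited)?; simp add: z_SSsr_exp_text_original length_exp_text ed_exp_text)
  then show ?thesis
    by auto
qed

lemma deletion_witness:
  "\<exists>T T' :: nat list. m \<le> z_SSsr T \<and> length T' + 1 = length T \<and> ed T T' = 1 \<and>
     2 * real (z_SSsr T) - 23 * sqrt (real (z_SSsr T)) \<le> real (z_SSsr T') - real (z_SSsr T)"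
proof -
  have "\<exists>A B :: nat list. m \<le> z_SSsr A \<and> (length B + 1 = length A \<and> ed A B = 1) \<and>
      real 3 * real (z_SSsr A) - 23 * sqrt (real (z_SSsr A)) \<le> real (z_SSsr B)"
    by (rule additive_witness[where T = "\<lambda>Q. exp_text [0] Q 0" and T' = "\<lambda>Q. exp_text [] Q 0" and d = 2];
        (rule z_SSsr_exp_text_edited)?; simp add: z_SSsr_exp_text_original length_exp_text ed_exp_text)
  then show ?thesis
    by auto
qed

lemma insertion_witness:
  "\<exists>T T' :: nat list. m \<le> z_SSsr T \<and> length T' = length T + 1 \<and> ed T T' = 1 \<and>
     real (z_SSsr T) - 23 * sqrt (real (z_SSsr T)) \<le> real (z_SSsr T') - real (z_SSsr T)"
proof -
  have "\<exists>A B :: nat list. m \<le> z_SSsr A \<and> (length B = length A + 1 \<and> ed A B = 1) \<and>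
      real 2 * real (z_SSsr A) - 23 * sqrt (real (z_SSsr A)) \<le> real (z_SSsr B)"
    by (rule additive_witness[where T = "\<lambda>Q. quad_text [0] Q 0" and T' = "\<lambda>Q. quad_text [9, 0] Q 0" and d = 1];
        (rule z_SSsr_quad_text_edited)?; simp add: z_SSsr_quad_text_original length_quad_text ed_quad_text)
  then show ?thesis
    by auto
qed

theorem mainTheorem14:
  fixes z :: "nat list \<Rightarrow> nat"
  defines "z \<equiv> z_SSsr"
  shows
    \<comment> \<open>substitutions\<close>
    "liminf (\<lambda>n. ereal (MS_sub z n)) \<ge> 3
     \<and> (\<exists>f :: nat \<Rightarrow> real. f \<in> \<Theta>(\<lambda>x. sqrt (real x)) \<and>
          (\<forall>m. \<exists>T T'. z T \<ge> m \<and> length T' = length T \<and> ed T T' = 1 \<and>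
               real (z T') - real (z T) \<ge> 2 * real (z T) - f (z T)))
     \<and> (\<lambda>n. AS_sub z n) \<in> \<Omega>(\<lambda>n. sqrt (real n))
     \<and> \<comment> \<open>insertions\<close>
       liminf (\<lambda>n. ereal (MS_ins z n)) \<ge> 2
     \<and> (\<exists>f :: nat \<Rightarrow> real. f \<in> \<Theta>(\<lambda>x. sqrt (real x)) \<and>
          (\<forall>m. \<exists>T T'. z T \<ge> m \<and> length T' = length T + 1 \<and> ed T T' = 1 \<and>
               real (z T') - real (z T) \<ge> real (z T) - f (z T)))
     \<and> (\<lambda>n. AS_ins z n) \<in> \<Omega>(\<lambda>n. sqrt (real n))
     \<and> \<comment> \<open>deletions\<close>
       liminf (\<lambda>n. ereal (MS_del z n)) \<ge> 3
     \<and> (\<exists>f :: nat \<Rightarrow> real. f \<in> \<Theta>(\<lambda>x. sqrt (real x)) \<and>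
          (\<forall>m. \<exists>T T'. z T \<ge> m \<and> length T' + 1 = length T \<and> ed T T' = 1 \<and>
               real (z T') - real (z T) \<ge> 2 * real (z T) - f (z T)))
     \<and> (\<lambda>n. AS_del z n) \<in> \<Omega>(\<lambda>n. sqrt (real n))"
proof -
  have "(\<lambda>x::nat. 23 * sqrt (real x)) \<in> \<Theta>(\<lambda>x. sqrt (real x))"
    by simp
  moreover have "ereal 3 \<le> liminf (\<lambda>n. ereal (MS_sub z n))"
    "ereal 3 \<le> liminf (\<lambda>n. ereal (MS_del z n))" "ereal 2 \<le> liminf (\<lambda>n. ereal (MS_ins z n))"
    unfolding z_def using MS_sub_approx MS_del_approx MS_ins_approx
    by (blast intro: ereal_le_liminf_if_approx)+
  moreover have "(\<lambda>n. AS_sub z n) \<in> \<Omega>(\<lambda>n. sqrt (real n))"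
    "(\<lambda>n. AS_del z n) \<in> \<Omega>(\<lambda>n. sqrt (real n))" "(\<lambda>n. AS_ins z n) \<in> \<Omega>(\<lambda>n. sqrt (real n))"
    unfolding z_def using AS_sub_ge AS_del_ge AS_ins_ge by (blast intro: bigomega_sqrt_if_ge)+
  ultimately show ?thesis
    unfolding z_def using substitution_witness deletion_witness insertion_witness
    by (intro conjI exI[of _ "\<lambda>x. 23 * sqrt (real x)"]) auto
qed

end
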